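(* For every positive integer $d$, $$e^*_6(d^2)=36\Bigl(e^*_1(d^2)-\tfrac35\,e^*_1(d_2^2)-\tfrac45\,e^*_1(d_3^2)+\tfrac{12}{25}\,e^*_1(d_6^2)\Bigr),$$ where $d_m=d/\prod_{p\mid m}p^{\nu_p(d)}$ is the largest divisor of $d$ coprime to $m$.
   Context: $\nu_p$ is the $p$-adic valuation. $\gamma_c(d^2)$ is multiplicative in $c$ with $\gamma_1=1$ and: $\gamma_{2^r}(d^2)=2^{r/2}$ if $r\ge2$ even and $\nu_2(d^2)=r-2$; $=2^{(r-1)/2}$ if $r$ odd and $\nu_2(d^2)\ge r-1$; $=0$ otherwise; for odd $p$, $\gamma_{p^r}(d^2)=p^{r/2-1}(p-1)$ if $r\ge2$ even and $\nu_p(d^2)\ge r$; $=p^{(r-1)/2}$ if $r$ odd and $\nu_p(d^2)=r-1$; $=0$ otherwise. $e^*_k(d^2)=\sum_{c\ge1}\frac{\gcd(c,2k)^2}{c^2}\gamma_c(d^2)$. *)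

theory Defs
  imports "HOL-Analysis.Analysis" "HOL-Computational_Algebra.Primes"
begin

definition gamma_pp :: "nat \<Rightarrow> nat \<Rightarrow> nat \<Rightarrow> real" where
  "gamma_pp p r n =
    (if r = 0 then 1
     else if p = 2 then
       (if r \<ge> 2 \<and> even r \<and> multiplicity 2 n = r - 2 then 2 ^ (r div 2)
        else if odd r \<and> multiplicity 2 n \<ge> r - 1 then 2 ^ ((r - 1) div 2)
        else 0)
     else
       (if r \<ge> 2 \<and> even r \<and> multiplicity p n \<ge> r
          then real p ^ (r div 2 - 1) * (real p - 1)
        else if odd r \<and> multiplicity p n = r - 1 then real p ^ ((r - 1) div 2)
        else 0))"

definition gamma :: "nat \<Rightarrow> nat \<Rightarrow> real" where
  "gamma c n = (\<Prod>p\<in>prime_factors c. gamma_pp p (multiplicity p c) n)"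

definition e_star :: "nat \<Rightarrow> nat \<Rightarrow> real" where
  "e_star k n = (\<Sum>c. (real (gcd (Suc c) (2 * k)))^2 / (real (Suc c))^2 * gamma (Suc c) n)"

definition coprime_part :: "nat \<Rightarrow> nat \<Rightarrow> nat" where
  "coprime_part d m = d div (\<Prod>p\<in>prime_factors m. p ^ multiplicity p d)"

end

theory Submission
  imports Defs
begin

text \<open>
  The series \<open>e\<^sup>*\<^sub>k(n)\<close> converges absolutely since \<open>\<gamma>\<^sub>c(n) \<le> \<surd>c\<close>.
  Write \<open>c = 2\<^sup>r 3\<^sup>s m\<close> with \<open>m\<close> prime to 6. If every prime factor of \<open>k\<close> is 2 or 3,
  the summand factors accordingly, so \<open>e\<^sup>*\<^sub>k(n) = L\<^sub>2 L\<^sub>3 S(n)\<close> with finite local sums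
  \<open>L\<^sub>2, L\<^sub>3\<close> and a prime-to-6 part \<open>S(n)\<close> that does not see the 2- and 3-parts of \<open>n\<close>.
  Going from \<open>k = 1\<close> to \<open>k = 6\<close> only changes the gcd weights:
  \<open>L\<^sub>2(6) = 4 L\<^sub>2(1) - 6\<close> and \<open>L\<^sub>3(6) = 9 L\<^sub>3(1) - 8\<close>, while removing the 2-part
  (3-part) of \<open>d\<close> turns \<open>L\<^sub>2(1)\<close> into \<open>5/2\<close> (\<open>L\<^sub>3(1)\<close> into \<open>10/9\<close>).
  Expanding \<open>(4x - 6)(9y - 8)\<close> gives the identity.
\<close>

lemma gcd_mult_coprime_left:
  fixes a b c :: nat
  assumes "coprime a b"
  shows "gcd (a * b) c = gcd a c * gcd b c"
proof (rule dvd_antisym)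
  obtain x y where xy: "gcd (a * b) c = x * y" "x dvd a" "y dvd b"
    using dvd_productE[OF gcd_dvd1[of "a * b" c]] .
  then have "x dvd gcd a c" "y dvd gcd b c"
    by (metis dvd_mult_right dvd_mult_left gcd_dvd2 gcd_greatest)+
  with xy show "gcd (a * b) c dvd gcd a c * gcd b c"
    by (simp add: mult_dvd_mono)
next
  have "coprime (gcd a c) (gcd b c)"
    using assms by (rule coprime_divisors[rotated 2]) auto
  then have "gcd a c * gcd b c dvd c"
    by (simp add: divides_mult)
  then show "gcd a c * gcd b c dvd gcd (a * b) c"
    by (simp add: mult_dvd_mono)
qed

lemma gamma_pp_cong:
  assumes "multiplicity p n = multiplicity p n'"
  shows "gamma_pp p r n = gamma_pp p r n'"
  using assms by (cases "p = 2") (simp_all add: gamma_pp_def)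

lemma gamma_pp_0 [simp]: "gamma_pp p 0 n = 1"
  by (simp add: gamma_pp_def)

lemma gamma_pp_eq_0:
  assumes "multiplicity p n + 2 < r"
  shows "gamma_pp p r n = 0"
  unfolding gamma_pp_def using assms by auto

lemma gamma_pp_square_le:
  assumes "prime p"
  shows "gamma_pp p r n ^ 2 \<le> real p ^ r"
proof -
  have p: "real p \<ge> 2" using prime_ge_2_nat[OF assms] by simp
  consider (zero) "r = 0" | (even) j where "r = 2 * Suc j" | (odd) j where "r = 2 * j + 1"
    by (metis oddE evenE mult_0_right not0_implies_Suc)
  then show ?thesis
  proof cases
    case even
    have "(real p ^ j * (real p - 1)) ^ 2 \<le> (real p ^ j * real p) ^ 2"
      using p by (intro power_mono mult_left_mono) auto
    also have "\<dots> = real p ^ r"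
      using even by (metis power_Suc2 power_mult mult.commute)
    finally show ?thesis
      using even by (auto simp: gamma_pp_def power_mult[symmetric] mult.commute)
  next
    case odd
    have "real p ^ (2 * j) \<le> real p ^ r"
      using p odd by (intro power_increasing) auto
    then show ?thesis
      using odd by (auto simp: gamma_pp_def power_mult[symmetric] mult.commute)
  qed simp
qed

lemma gamma_pp_nonneg: "prime p \<Longrightarrow> gamma_pp p r n \<ge> 0"
  unfolding gamma_pp_def using prime_ge_1_nat[of p] by auto

lemma gamma_nonneg: "gamma c n \<ge> 0"
  unfolding gamma_def by (intro prod_nonneg gamma_pp_nonneg) auto

lemma gamma_le_sqrt:
  assumes "c > 0"
  shows "gamma c n \<le> sqrt (real c)"
proof (rule real_le_rsqrt)
  have "gamma c n ^ 2 = (\<Prod>p\<in>prime_factors c. gamma_pp p (multiplicity p c) n ^ 2)"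
    unfolding gamma_def by (simp add: prod_power_distrib)
  also have "\<dots> \<le> (\<Prod>p\<in>prime_factors c. real p ^ multiplicity p c)"
    by (intro prod_mono conjI gamma_pp_square_le) auto
  also have "\<dots> = real (\<Prod>p\<in>prime_factors c. p ^ multiplicity p c)"
    by simp
  also have "\<dots> = real c"
    using assms by (simp add: prod_prime_factors)
  finally show "gamma c n ^ 2 \<le> real c" .
qed

lemma gamma_prime_power: "prime p \<Longrightarrow> gamma (p ^ r) n = gamma_pp p r n"
  by (cases "r = 0") (simp_all add: gamma_def prime_factorization_prime_power)

lemma gamma_mult:
  assumes "coprime a b" "a > 0" "b > 0"
  shows "gamma (a * b) n = gamma a n * gamma b n"
proof -
  have not_both: "\<not> (p dvd a \<and> p dvd b)" if "prime p" for p
    using assms(1) that by (metis coprime_common_divisor not_prime_unit)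
  then have disjoint: "prime_factors a \<inter> prime_factors b = {}"
    by (auto simp: in_prime_factors_iff)
  have "multiplicity p (a * b) = multiplicity p a" if "p \<in> prime_factors a" for p
  proof -
    have "\<not> p dvd b" using that not_both by auto
    then show ?thesis
      using that assms
      by (simp add: in_prime_factors_iff prime_elem_multiplicity_mult_distrib not_dvd_imp_multiplicity_0)
  qed
  moreover have "multiplicity p (a * b) = multiplicity p b" if "p \<in> prime_factors b" for p
  proof -
    have "\<not> p dvd a" using that not_both by auto
    then show ?thesis
      using that assms
      by (simp add: in_prime_factors_iff prime_elem_multiplicity_mult_distrib not_dvd_imp_multiplicity_0)
  qed
  ultimately show ?thesis
    using assms disjoint unfolding gamma_def
    by (simp add: prime_factors_product prod.union_disjoint)
qed

lemma gamma_cong: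
  assumes "\<And>p. p \<in> prime_factors c \<Longrightarrow> multiplicity p n = multiplicity p n'"
  shows "gamma c n = gamma c n'"
  unfolding gamma_def by (intro prod.cong refl gamma_pp_cong assms)

definition e_star_term :: "nat \<Rightarrow> nat \<Rightarrow> nat \<Rightarrow> real" where
  "e_star_term k n c = real (gcd c (2 * k)) ^ 2 / real c ^ 2 * gamma c n"

lemma gamma_div_square_summable: "(\<lambda>c. gamma c n / real c ^ 2) summable_on {0<..}"
proof (rule summable_on_comparison_test)
  have "summable (\<lambda>c. real c powr (-3/2))"
    by (simp add: summable_real_powr_iff)
  then have "(\<lambda>c. real c powr (-3/2)) summable_on UNIV"
    by (simp add: summable_on_UNIV_nonneg_real_iff)
  then show "(\<lambda>c. real c powr (-3/2)) summable_on {0<..}"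
    by (rule summable_on_subset_banach) simp
  show "gamma c n / real c ^ 2 \<le> real c powr (-3/2)" if "c \<in> {0<..}" for c
  proof -
    have "gamma c n / real c ^ 2 \<le> sqrt (real c) / real c ^ 2"
      using that gamma_le_sqrt[of c n] by (simp add: divide_right_mono)
    also have "\<dots> = real c powr (1/2) / real c powr 2"
      using that by (simp add: powr_half_sqrt)
    also have "\<dots> = real c powr (1/2 - 2)"
      by (rule powr_diff [symmetric])
    finally show ?thesis
      by simp
  qed
qed (simp add: gamma_nonneg)

lemma e_star_has_sum:
  assumes "k > 0"
  shows "(e_star_term k n has_sum e_star k n) {0<..}"
proof -
  have "e_star_term k n summable_on {0<..}"
  proof (rule summable_on_comparison_test)
    show "(\<lambda>c. real (2 * k) ^ 2 * (gamma c n / real c ^ 2)) summable_on {0<..}"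
      by (intro summable_on_cmult_right gamma_div_square_summable)
    show "e_star_term k n c \<le> real (2 * k) ^ 2 * (gamma c n / real c ^ 2)" for c
    proof -
      have "gcd c (2 * k) \<le> 2 * k"
        using assms by simp
      then have "real (gcd c (2 * k)) ^ 2 * (gamma c n / real c ^ 2)
          \<le> real (2 * k) ^ 2 * (gamma c n / real c ^ 2)"
        by (intro mult_right_mono power_mono) (simp_all add: gamma_nonneg)
      then show ?thesis
        by (simp add: e_star_term_def)
    qed
  qed (simp add: e_star_term_def gamma_nonneg)
  then obtain S where S: "(e_star_term k n has_sum S) {0<..}"
    by (auto simp: summable_on_def)
  have "bij_betw Suc UNIV {0<..}"
    by (rule bij_betwI[of _ _ _ "\<lambda>c. c - 1"]) auto
  then have "((\<lambda>c. e_star_term k n (Suc c)) has_sum S) UNIV"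
    using S by (simp add: has_sum_reindex_bij_betw)
  then have "(\<lambda>c. e_star_term k n (Suc c)) sums S"
    by (rule has_sum_imp_sums)
  then have "e_star k n = S"
    unfolding e_star_def e_star_term_def by (rule sums_unique[symmetric])
  with S show ?thesis by simp
qed

definition prime_to_6 :: "nat set" where
  "prime_to_6 = {m. 0 < m \<and> coprime m 6}"

lemma prime_to_6_not_dvd:
  assumes "m \<in> prime_to_6"
  shows "\<not> 2 dvd m" "\<not> 3 dvd m"
proof -
  have "coprime m (2 * 3)"
    using assms by (simp add: prime_to_6_def)
  then show "\<not> 2 dvd m" "\<not> 3 dvd m"
    by (auto dest: coprime_common_divisor)
qed

lemma multiplicity_split6:
  assumes "m \<in> prime_to_6"
  shows "multiplicity 2 (2 ^ r * 3 ^ s * m) = r" "multiplicity 3 (2 ^ r * 3 ^ s * m) = s"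
  using assms prime_to_6_not_dvd[OF assms]
  by (simp_all add: prime_to_6_def prime_elem_multiplicity_mult_distrib
      multiplicity_distinct_prime_power not_dvd_imp_multiplicity_0)

lemma split6_exists:
  assumes "c > 0"
  obtains r s m where "m \<in> prime_to_6" "c = 2 ^ r * 3 ^ s * m"
proof -
  obtain y where y: "c = 2 ^ multiplicity 2 c * y" "\<not> 2 dvd y"
    by (rule multiplicity_decompose'[of c 2]) (use assms in auto)
  have "y \<noteq> 0"
    using y(2) by (metis dvd_0_right)
  obtain m where m: "y = 3 ^ multiplicity 3 y * m" "\<not> 3 dvd m"
    by (rule multiplicity_decompose'[of y 3]) (use \<open>y \<noteq> 0\<close> in auto)
  have "\<not> 2 dvd m"
    using m(1) y(2) by (metis dvd_mult)
  then have "coprime 2 m" "coprime 3 m"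
    using m(2) by (simp_all add: prime_imp_coprime)
  then have "coprime m 6"
    using coprime_mult_left_iff[of 2 3 m] by (simp add: coprime_commute)
  moreover have "m > 0"
    using \<open>y \<noteq> 0\<close> m(1) by (cases "m = 0") auto
  ultimately have "m \<in> prime_to_6"
    by (simp add: prime_to_6_def)
  with y m show ?thesis
    by (metis mult.assoc that)
qed

lemma bij_betw_split6:
  "bij_betw (\<lambda>((r, s), m). 2 ^ r * 3 ^ s * m) (UNIV \<times> prime_to_6) {0<..}"
proof (rule bij_betw_imageI)
  show "inj_on (\<lambda>((r, s), m). 2 ^ r * 3 ^ s * m) (UNIV \<times> prime_to_6)"
  proof (rule inj_onI, clarsimp)
    fix r s m r' s' m' :: nat
    assume m: "m \<in> prime_to_6" "m' \<in> prime_to_6" and eq: "2 ^ r * 3 ^ s * m = 2 ^ r' * 3 ^ s' * m'"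
    have "r = r'" "s = s'"
      using multiplicity_split6[OF m(1), of r s] multiplicity_split6[OF m(2), of r' s'] eq by simp_all
    with eq show "r = r' \<and> s = s' \<and> m = m'"
      by simp
  qed
  show "(\<lambda>((r, s), m). 2 ^ r * 3 ^ s * m) ` (UNIV \<times> prime_to_6) = {0<..}"
  proof (intro equalityI subsetI)
    fix c :: nat
    assume "c \<in> {0<..}"
    then obtain r s m where "m \<in> prime_to_6" "c = 2 ^ r * 3 ^ s * m"
      by (metis split6_exists greaterThan_iff)
    then show "c \<in> (\<lambda>((r, s), m). 2 ^ r * 3 ^ s * m) ` (UNIV \<times> prime_to_6)"
      by (auto intro: image_eqI[of _ _ "((r, s), m)"])
  qed (auto simp: prime_to_6_def)
qed

lemma prime_to_6_coprime:
  assumes "m \<in> prime_to_6" "k > 0" "prime_factors k \<subseteq> {2, 3}"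
  shows "coprime m (2 * k)"
proof (rule coprimeI)
  fix c
  assume c: "c dvd m" "c dvd 2 * k"
  show "is_unit c"
  proof (rule ccontr)
    assume "\<not> is_unit c"
    moreover have "c \<noteq> 0"
      using c(1) assms(1) by (auto simp: prime_to_6_def)
    ultimately obtain p where p: "prime p" "p dvd c"
      by (elim prime_divisorE)
    then have "p dvd 2 \<or> p dvd k"
      using c(2) by (metis dvd_trans prime_dvd_mult_iff)
    then have "p = 2 \<or> p = 3"
      using p(1) assms(2,3) by (auto simp: primes_dvd_imp_eq in_prime_factors_iff)
    then show False
      using p(2) c(1) prime_to_6_not_dvd[OF assms(1)] by (auto dest: dvd_trans)
  qed
qed

definition local_term :: "nat \<Rightarrow> nat \<Rightarrow> nat \<Rightarrow> nat \<Rightarrow> real" where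
  "local_term p k n r = real (gcd (p ^ r) (2 * k)) ^ 2 / real p ^ (2 * r) * gamma_pp p r n"

lemma e_star_term_split6:
  assumes "m \<in> prime_to_6" "k > 0" "prime_factors k \<subseteq> {2, 3}"
  shows "e_star_term k n (2 ^ r * 3 ^ s * m)
    = local_term 2 k n r * local_term 3 k n s * (gamma m n / real m ^ 2)"
proof -
  have "coprime m (2 * 3)"
    using assms(1) by (simp add: prime_to_6_def)
  then have "coprime m 2 \<and> coprime m 3"
    by (simp only: coprime_mult_right_iff)
  then have m: "m > 0" "coprime (2 ^ r * 3 ^ s) m"
    using assms(1) by (auto simp: prime_to_6_def coprime_commute)
  have coprime_2_3: "coprime (2 ^ r) (3 ^ s :: nat)"
    by simp
  have "gcd (2 ^ r * 3 ^ s * m) (2 * k) = gcd (2 ^ r * 3 ^ s) (2 * k)"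
    using prime_to_6_coprime[OF assms] by (simp add: gcd_mult_left_right_cancel coprime_commute)
  also have "\<dots> = gcd (2 ^ r) (2 * k) * gcd (3 ^ s) (2 * k)"
    using coprime_2_3 by (rule gcd_mult_coprime_left)
  finally have gcd: "gcd (2 ^ r * 3 ^ s * m) (2 * k) = gcd (2 ^ r) (2 * k) * gcd (3 ^ s) (2 * k)" .
  have gamma: "gamma (2 ^ r * 3 ^ s * m) n = gamma_pp 2 r n * gamma_pp 3 s n * gamma m n"
    using m coprime_2_3 by (simp add: gamma_mult gamma_prime_power)
  show ?thesis
    unfolding e_star_term_def local_term_def gcd gamma
    by (simp add: power_mult_distrib power_mult field_simps)
qed

text \<open>The terms with \<open>r > \<nu>\<^sub>p(n) + 2\<close> vanish by \<open>gamma_pp_eq_0\<close>, so this is the full local sum.\<close>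
definition local_factor :: "nat \<Rightarrow> nat \<Rightarrow> nat \<Rightarrow> real" where
  "local_factor p k n = (\<Sum>r\<le>multiplicity p n + 2. local_term p k n r)"

definition prime_to_6_sum :: "nat \<Rightarrow> real" where
  "prime_to_6_sum n = infsum (\<lambda>m. gamma m n / real m ^ 2) prime_to_6"

lemma prime_to_6_has_sum: "((\<lambda>m. gamma m n / real m ^ 2) has_sum prime_to_6_sum n) prime_to_6"
proof -
  have "(\<lambda>m. gamma m n / real m ^ 2) summable_on prime_to_6"
    by (rule summable_on_subset_banach[OF gamma_div_square_summable]) (auto simp: prime_to_6_def)
  then show ?thesis
    unfolding prime_to_6_sum_def by simp
qed

lemma e_star_factorization:
  assumes "k > 0" "prime_factors k \<subseteq> {2, 3}"
  shows "e_star k n = local_factor 2 k n * local_factor 3 k n * prime_to_6_sum n"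
proof -
  define D where "D = {..multiplicity 2 n + 2} \<times> {..multiplicity 3 n + 2}"
  define f where "f x = e_star_term k n ((\<lambda>((r, s), m). 2 ^ r * 3 ^ s * m) x)" for x
  have f: "f ((r, s), m) = local_term 2 k n r * local_term 3 k n s * (gamma m n / real m ^ 2)"
    if "m \<in> prime_to_6" for r s m
    unfolding f_def using e_star_term_split6[OF that assms] by simp
  have "(f has_sum e_star k n) (UNIV \<times> prime_to_6)"
    unfolding f_def using e_star_has_sum[OF assms(1)]
    by (simp add: has_sum_reindex_bij_betw[OF bij_betw_split6])
  moreover have "f ((r, s), m) = 0" if "m \<in> prime_to_6" "(r, s) \<notin> D" for r s m
  proof -
    have "gamma_pp 2 r n = 0 \<or> gamma_pp 3 s n = 0"
      using that(2) unfolding D_def by (auto simp: not_le gamma_pp_eq_0)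
    then show ?thesis
      using f[OF that(1)] by (auto simp: local_term_def)
  qed
  ultimately have "(f has_sum e_star k n) (D \<times> prime_to_6)"
    by (subst (asm) has_sum_cong_neutral[of "D \<times> prime_to_6" _ f]) auto
  moreover have "((\<lambda>m. f ((r, s), m)) has_sum
      local_term 2 k n r * local_term 3 k n s * prime_to_6_sum n) prime_to_6" for r s
  proof -
    have "((\<lambda>m. local_term 2 k n r * local_term 3 k n s * (gamma m n / real m ^ 2)) has_sum
        local_term 2 k n r * local_term 3 k n s * prime_to_6_sum n) prime_to_6"
      by (rule has_sum_cmult_right[OF prime_to_6_has_sum])
    then show ?thesis
      by (subst has_sum_cong) (simp_all add: f)
  qed
  ultimately have "((\<lambda>(r, s). local_term 2 k n r * local_term 3 k n s * prime_to_6_sum n)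
      has_sum e_star k n) D"
    by (intro has_sum_SigmaD[of f D "\<lambda>_. prime_to_6"]) auto
  moreover have "finite D"
    by (simp add: D_def)
  ultimately have "e_star k n = (\<Sum>(r, s)\<in>D. local_term 2 k n r * local_term 3 k n s * prime_to_6_sum n)"
    using has_sum_finite has_sum_unique by blast
  also have "\<dots> = local_factor 2 k n * local_factor 3 k n * prime_to_6_sum n"
    unfolding D_def local_factor_def
    by (simp add: sum.cartesian_product[symmetric] sum_distrib_left sum_distrib_right del: sum.atMost_Suc)
      (rule sum.swap)
  finally show ?thesis .
qed

lemma local_factor_cong:
  assumes "multiplicity p n = multiplicity p n'"
  shows "local_factor p k n = local_factor p k n'"
  unfolding local_factor_def local_term_def using assms gamma_pp_cong[OF assms] by simp

lemma prime_to_6_sum_cong: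
  assumes "\<And>p. prime p \<Longrightarrow> p \<noteq> 2 \<Longrightarrow> p \<noteq> 3 \<Longrightarrow> multiplicity p n = multiplicity p n'"
  shows "prime_to_6_sum n = prime_to_6_sum n'"
proof -
  have "gamma m n = gamma m n'" if "m \<in> prime_to_6" for m
  proof (rule gamma_cong)
    fix p
    assume "p \<in> prime_factors m"
    then have "prime p" "p dvd m"
      by (auto simp: in_prime_factors_iff)
    with prime_to_6_not_dvd[OF that] show "multiplicity p n = multiplicity p n'"
      by (metis assms)
  qed
  then show ?thesis
    unfolding prime_to_6_sum_def by (intro infsum_cong) simp
qed

lemma local_term_0 [simp]: "local_term p k n 0 = 1"
  by (simp add: local_term_def)

lemma local_factor_2_6: "local_factor 2 6 n = 4 * local_factor 2 1 n - 6"
proof -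
  have "gcd (4 * 2 ^ i) (4 * 3 :: nat) = 4 * gcd (2 ^ i) 3" for i
    by (rule gcd_mult_distrib_nat [symmetric])
  then have "local_term 2 6 n (Suc (Suc i)) = 4 * local_term 2 1 n (Suc (Suc i))" for i
    by (simp add: local_term_def)
  moreover have "local_term 2 k n 1 = 1" for k
    by (simp add: local_term_def gamma_pp_def)
  ultimately show ?thesis
    by (simp add: local_factor_def sum.atMost_Suc_shift sum_distrib_left del: sum.atMost_Suc)
qed

lemma local_factor_3_6: "local_factor 3 6 n = 9 * local_factor 3 1 n - 8"
proof -
  have "coprime (3 :: nat) 4"
    by (simp add: coprime_iff_gcd_eq_1 gcd_non_0_nat)
  then have "coprime (3 ^ i) (4 :: nat)" for i
    by simp
  then have "gcd (3 * 3 ^ i) (3 * 4 :: nat) = 3" for i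
    using gcd_mult_distrib_nat[of 3 "3 ^ i" 4] by (simp add: coprime_iff_gcd_eq_1)
  then have "local_term 3 6 n (Suc i) = 9 * local_term 3 1 n (Suc i)" for i
    by (simp add: local_term_def)
  then show ?thesis
    by (simp add: local_factor_def sum.atMost_Suc_shift sum_distrib_left del: sum.atMost_Suc)
qed

lemma local_factor_unramified:
  assumes "multiplicity p n = 0"
  shows "local_factor p k n = 1 + local_term p k n 1 + local_term p k n 2"
  using assms by (simp add: local_factor_def numeral_2_eq_2)

lemma local_factor_2_1_unramified:
  assumes "multiplicity 2 n = 0"
  shows "local_factor 2 1 n = 5/2"
  using assms by (simp add: local_factor_unramified local_term_def gamma_pp_def)

lemma local_factor_3_1_unramified:
  assumes "multiplicity 3 n = 0"
  shows "local_factor 3 1 n = 10/9"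
  using assms by (simp add: local_factor_unramified local_term_def gamma_pp_def)

lemma multiplicity_prime_factors_part:
  fixes p m d :: nat
  assumes "prime p" "m > 0"
  shows "multiplicity p (\<Prod>q\<in>prime_factors m. q ^ multiplicity q d)
    = (if p dvd m then multiplicity p d else 0)"
proof -
  have "multiplicity p (\<Prod>q\<in>prime_factors m. q ^ multiplicity q d)
      = (\<Sum>q\<in>prime_factors m. multiplicity p (q ^ multiplicity q d))"
    using assms(1) by (intro prime_elem_multiplicity_prod_distrib) (auto simp: in_prime_factors_iff)
  also have "\<dots> = (\<Sum>q\<in>prime_factors m. if q = p then multiplicity p d else 0)"
    using assms(1) by (intro sum.cong) (auto simp: in_prime_factors_iff multiplicity_distinct_prime_power)
  also have "\<dots> = (if p dvd m then multiplicity p d else 0)"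
    using assms by (auto simp: in_prime_factors_iff)
  finally show ?thesis .
qed

lemma coprime_part_eq:
  fixes m d :: nat
  assumes "m > 0"
  shows "d = (\<Prod>q\<in>prime_factors m. q ^ multiplicity q d) * coprime_part d m"
proof -
  have "(\<Prod>q\<in>prime_factors m. q ^ multiplicity q d) dvd d"
    using assms
    by (intro multiplicity_le_imp_dvd) (auto simp: multiplicity_prime_factors_part in_prime_factors_iff)
  then show ?thesis
    by (simp add: coprime_part_def)
qed

lemma multiplicity_coprime_part:
  assumes "prime p" "d > 0" "m > 0"
  shows "multiplicity p (coprime_part d m) = (if p dvd m then 0 else multiplicity p d)"
proof -
  have "multiplicity p d = multiplicity p (\<Prod>q\<in>prime_factors m. q ^ multiplicity q d)
      + multiplicity p (coprime_part d m)"
    using assms coprime_part_eq[OF assms(3), of d]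
    by (metis prime_elem_multiplicity_mult_distrib prime_imp_prime_elem mult_eq_0_iff neq0_conv)
  then show ?thesis
    using assms by (cases "p dvd m") (simp_all add: multiplicity_prime_factors_part)
qed

lemma multiplicity_square_coprime_part:
  assumes "prime p" "d > 0" "m > 0"
  shows "multiplicity p ((coprime_part d m)^2) = (if p dvd m then 0 else multiplicity p (d^2))"
proof -
  have "coprime_part d m > 0"
    using assms coprime_part_eq[OF assms(3), of d] by (metis mult_0_right neq0_conv)
  then show ?thesis
    using assms by (simp add: prime_elem_multiplicity_power_distrib multiplicity_coprime_part)
qed

lemma prime_dvd_6_iff:
  assumes "prime (p :: nat)"
  shows "p dvd 6 \<longleftrightarrow> p = 2 \<or> p = 3"
proof -
  have "p dvd 2 * 3 \<longleftrightarrow> p dvd 2 \<or> p dvd 3"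
    using assms by (rule prime_dvd_mult_iff)
  then show ?thesis
    using assms by (auto simp: primes_dvd_imp_eq)
qed

lemma e_star_1_coprime_part:
  assumes "d > 0" "m dvd 6"
  shows "e_star 1 ((coprime_part d m)^2)
    = (if 2 dvd m then 5/2 else local_factor 2 1 (d^2))
      * (if 3 dvd m then 10/9 else local_factor 3 1 (d^2)) * prime_to_6_sum (d^2)"
proof -
  have m: "m > 0"
    using assms(2) by (cases "m = 0") auto
  let ?n = "(coprime_part d m)^2"
  have "local_factor 2 1 ?n = (if 2 dvd m then 5/2 else local_factor 2 1 (d^2))"
  proof (cases "2 dvd m")
    case True
    then have "multiplicity 2 ?n = 0"
      by (simp add: multiplicity_square_coprime_part assms(1) m)
    then show ?thesis
      unfolding if_P[OF True] by (rule local_factor_2_1_unramified)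
  next
    case False
    then have "multiplicity 2 ?n = multiplicity 2 (d^2)"
      by (simp add: multiplicity_square_coprime_part assms(1) m)
    then show ?thesis
      unfolding if_not_P[OF False] by (rule local_factor_cong)
  qed
  moreover have "local_factor 3 1 ?n = (if 3 dvd m then 10/9 else local_factor 3 1 (d^2))"
  proof (cases "3 dvd m")
    case True
    then have "multiplicity 3 ?n = 0"
      by (simp add: multiplicity_square_coprime_part assms(1) m)
    then show ?thesis
      unfolding if_P[OF True] by (rule local_factor_3_1_unramified)
  next
    case False
    then have "multiplicity 3 ?n = multiplicity 3 (d^2)"
      by (simp add: multiplicity_square_coprime_part assms(1) m)
    then show ?thesis
      unfolding if_not_P[OF False] by (rule local_factor_cong)
  qed
  moreover have "prime_to_6_sum ?n = prime_to_6_sum (d^2)"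
  proof (rule prime_to_6_sum_cong)
    fix p :: nat
    assume "prime p" "p \<noteq> 2" "p \<noteq> 3"
    then have "\<not> p dvd m"
      using assms(2) prime_dvd_6_iff by (metis dvd_trans)
    with \<open>prime p\<close> show "multiplicity p ?n = multiplicity p (d^2)"
      by (simp add: multiplicity_square_coprime_part assms(1) m)
  qed
  ultimately show ?thesis
    using e_star_factorization[of 1] by simp
qed

theorem corollary5p4:
  fixes d :: nat
  assumes "d > 0"
  shows "e_star 6 (d^2) = 36 * (e_star 1 (d^2) - 3/5 * e_star 1 ((coprime_part d 2)^2)
           - 4/5 * e_star 1 ((coprime_part d 3)^2) + 12/25 * e_star 1 ((coprime_part d 6)^2))"
proof -
  define x where "x = local_factor 2 1 (d^2)"
  define y where "y = local_factor 3 1 (d^2)"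
  define P where "P = prime_to_6_sum (d^2)"
  have "prime_factors (6 :: nat) \<subseteq> {2, 3}"
    using prime_dvd_6_iff by (auto simp: in_prime_factors_iff)
  then have "e_star 6 (d^2) = (4 * x - 6) * (9 * y - 8) * P"
    unfolding x_def y_def P_def
    by (simp add: e_star_factorization local_factor_2_6 local_factor_3_6)
  moreover have "e_star 1 (d^2) = x * y * P"
    unfolding x_def y_def P_def by (simp add: e_star_factorization)
  moreover have "e_star 1 ((coprime_part d 2)^2) = 5/2 * y * P"
    "e_star 1 ((coprime_part d 3)^2) = x * (10/9) * P"
    "e_star 1 ((coprime_part d 6)^2) = 5/2 * (10/9) * P"
    unfolding x_def y_def P_def using e_star_1_coprime_part[OF assms] by simp_all
  ultimately show ?thesis
    by (simp add: algebra_simps)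
qed

end
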